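(* Let $\Sigma_1,\Sigma_2$ be subspaces of the Euclidean space $E_n$ with $1\le \dim\Sigma_1,\dim\Sigma_2\le n-1$, and let $\Sigma_1^*,\Sigma_2^*$ be their orthogonal complements. Then $\varphi(\Sigma_1,\Sigma_2)=\varphi(\Sigma_1^*,\Sigma_2^* )$.
   Context: $E_n$ is $\mathbb R^n$ with its standard inner product $(\cdot,\cdot)$. Angle between subspaces: for nonzero subspaces $S,T$ of $E_n$ with $\dim S=p\le q=\dim T$, choose orthonormal bases $\mathbf a_1,\dots,\mathbf a_p$ of $S$ and $\mathbf b_1,\dots,\mathbf b_q$ of $T$ and let $M$ be the $p\times q$ matrix $M_{ij}=(\mathbf a_i,\mathbf b_j)$. Then $0\le\det(MM^T)\le 1$, and the angle $\varphi(S,T)=\varphi(T,S)\in[0,\pi/2]$ is defined by $\cos^2\varphi(S,T)=\det(MM^T)$ (this does not depend on the choice of orthonormal bases). *)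

theory Defs
  imports "HOL-Analysis.Analysis"
begin

definition is_onb :: "'a::euclidean_space set \<Rightarrow> 'a list \<Rightarrow> bool" where
  "is_onb S as \<longleftrightarrow> length as = dim S \<and>
     (\<forall>i<length as. \<forall>j<length as. as ! i \<bullet> as ! j = (if i = j then 1 else 0)) \<and>
     span (set as) = S"

definition det_nat :: "nat \<Rightarrow> (nat \<Rightarrow> nat \<Rightarrow> real) \<Rightarrow> real" where
  "det_nat p A = (\<Sum>\<sigma> | \<sigma> permutes {..<p}. of_int (sign \<sigma>) * (\<Prod>i<p. A i (\<sigma> i)))"

text \<open>det(M M^T) where M_ij = (a_i, b_j), p = length as, q = length bs.\<close>
definition gram_cos2 :: "'a::euclidean_space list \<Rightarrow> 'a list \<Rightarrow> real" where
  "gram_cos2 as bs = det_nat (length as)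
     (\<lambda>i j. \<Sum>k<length bs. (as ! i \<bullet> bs ! k) * (as ! j \<bullet> bs ! k))"

definition cos2_angle :: "'a::euclidean_space set \<Rightarrow> 'a set \<Rightarrow> real" where
  "cos2_angle S T =
     (if dim S \<le> dim T then gram_cos2 (SOME as. is_onb S as) (SOME bs. is_onb T bs)
      else gram_cos2 (SOME bs. is_onb T bs) (SOME as. is_onb S as))"

definition subspace_angle :: "'a::euclidean_space set \<Rightarrow> 'a set \<Rightarrow> real" where
  "subspace_angle S T = arccos (sqrt (cos2_angle S T))"

end

theory Submission
  imports Defs "Jordan_Normal_Form.Determinant"
begin

text \<open>Fix orthonormal bases \<open>a\<close> of \<open>\<Sigma>1\<close>, \<open>b\<close> of \<open>\<Sigma>2\<close>, \<open>c\<close> of \<open>\<Sigma>2\<^sup>*\<close> and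
  \<open>d\<close> of \<open>\<Sigma>1\<^sup>*\<close>, and let \<open>B\<close> be the matrix \<open>((a\<^sub>i, c\<^sub>k))\<close>. Since \<open>b\<close> and \<open>c\<close>
  together form an orthonormal basis of \<open>E\<^sub>n\<close>, Parseval's identity gives
  \<open>M(a,b) M(a,b)\<^sup>T = 1 - B B\<^sup>T\<close>, and in the same way
  \<open>M(c,d) M(c,d)\<^sup>T = 1 - B\<^sup>T B\<close>. Sylvester's determinant identity
  \<open>det (1 - B B\<^sup>T) = det (1 - B\<^sup>T B)\<close> then equates the two squared cosines.\<close>

lemma det_one_minus_mult_commute:
  fixes A :: "'a::idom mat"
  assumes A: "A \<in> carrier_mat p m" and B: "B \<in> carrier_mat m p"
  shows "Determinant.det (1\<^sub>m p - A * B) = Determinant.det (1\<^sub>m m - B * A)"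
proof -
  define M where "M = four_block_mat (1\<^sub>m p) A B (1\<^sub>m m)"
  define N1 where "N1 = four_block_mat (1\<^sub>m p) (-A) (0\<^sub>m m p) (1\<^sub>m m)"
  define N2 where "N2 = four_block_mat (1\<^sub>m p) (0\<^sub>m p m) (-B) (1\<^sub>m m)"
  have M: "M \<in> carrier_mat (p+m) (p+m)" unfolding M_def using A B by auto
  have N1: "N1 \<in> carrier_mat (p+m) (p+m)" unfolding N1_def using A by auto
  have N2: "N2 \<in> carrier_mat (p+m) (p+m)" unfolding N2_def using B by auto
  have "Determinant.det N1 = 1" unfolding N1_def
    by (subst det_four_block_mat_lower_left_zero[of _ p _ m]) (use A in auto)
  moreover have "Determinant.det N2 = 1" unfolding N2_def
    by (subst det_four_block_mat_upper_right_zero[of _ p _ m]) (use B in auto)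
  moreover have "M * N1 = four_block_mat (1\<^sub>m p) (0\<^sub>m p m) B (1\<^sub>m m - B * A)"
    unfolding M_def N1_def using A B by (subst mult_four_block_mat) auto
  then have "Determinant.det (M * N1) = Determinant.det (1\<^sub>m m - B * A)"
    by (simp, subst det_four_block_mat_upper_right_zero[of _ p _ m]) (use A B in auto)
  moreover have "M * N2 = four_block_mat (1\<^sub>m p - A * B) A (0\<^sub>m m p) (1\<^sub>m m)"
    unfolding M_def N2_def using A B by (subst mult_four_block_mat) auto
  then have "Determinant.det (M * N2) = Determinant.det (1\<^sub>m p - A * B)"
    by (simp, subst det_four_block_mat_lower_left_zero[of _ p _ m]) (use A B in auto)
  ultimately show ?thesis using det_mult[OF M N1] det_mult[OF M N2] by simp
qed

no_notation Matrix.scalar_prod (infix "\<bullet>" 70)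

definition orthonormal_list :: "'a::real_inner list \<Rightarrow> bool" where
  "orthonormal_list xs \<longleftrightarrow>
     (\<forall>i<length xs. \<forall>j<length xs. xs ! i \<bullet> xs ! j = (if i = j then 1 else 0))"

lemma is_onb_iff:
  "is_onb S xs \<longleftrightarrow> length xs = dim S \<and> orthonormal_list xs \<and> span (set xs) = S"
  unfolding is_onb_def orthonormal_list_def by blast

lemma inner_nth_sum_orthonormal_list:
  assumes "orthonormal_list xs" and "j < length xs"
  shows "xs ! j \<bullet> (\<Sum>k<length xs. c k *\<^sub>R xs ! k) = c j"
proof -
  have "xs ! j \<bullet> (\<Sum>k<length xs. c k *\<^sub>R xs ! k) = (\<Sum>k<length xs. c k * (if j = k then 1 else 0))"
    unfolding inner_sum_right inner_scaleR_right using assms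
    by (intro sum.cong) (auto simp: orthonormal_list_def)
  also have "\<dots> = c j" using assms(2) by (simp add: if_distrib cong: if_cong)
  finally show ?thesis .
qed

lemma orthogonal_span_list:
  fixes xs :: "'a::real_inner list"
  assumes "\<And>j. j < length xs \<Longrightarrow> xs ! j \<bullet> r = 0" and "z \<in> span (set xs)"
  shows "z \<bullet> r = 0"
proof -
  have "Linear_Algebra.orthogonal r z"
    by (rule orthogonal_to_span[OF assms(2)])
       (metis assms(1) in_set_conv_nth inner_commute Linear_Algebra.orthogonal_def)
  then show ?thesis by (simp add: Linear_Algebra.orthogonal_def inner_commute)
qed

lemma orthonormal_list_expansion:
  fixes w :: "'a::real_inner"
  assumes xs: "orthonormal_list xs" and w: "w \<in> span (set xs)"
  shows "w = (\<Sum>k<length xs. (w \<bullet> xs ! k) *\<^sub>R xs ! k)"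
proof -
  define r where "r = w - (\<Sum>k<length xs. (w \<bullet> xs ! k) *\<^sub>R xs ! k)"
  have "r \<in> span (set xs)" unfolding r_def
    by (intro span_diff w span_sum span_mul span_base) simp
  moreover have "xs ! j \<bullet> r = 0" if "j < length xs" for j
    using inner_nth_sum_orthonormal_list[OF xs that]
    by (simp add: r_def inner_diff_right inner_commute)
  ultimately have "r \<bullet> r = 0" using orthogonal_span_list by blast
  then show ?thesis unfolding r_def by simp
qed

lemma is_onb_exists:
  fixes S :: "'a::euclidean_space set"
  assumes "subspace S"
  shows "\<exists>xs. is_onb S xs"
proof -
  obtain B where ortho: "pairwise Linear_Algebra.orthogonal B" "\<And>x. x \<in> B \<Longrightarrow> norm x = 1"
    and "independent B" and card: "card B = dim S" and span: "span B = S"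
    using orthonormal_basis_subspace[OF assms] by metis
  then have "finite B" by (simp add: indep_card_eq_dim_span)
  then obtain xs where xs: "set xs = B" "distinct xs" using finite_distinct_list by blast
  have "xs ! i \<bullet> xs ! j = (if i = j then 1 else 0)"
    if "i < length xs" "j < length xs" for i j
  proof -
    have "xs ! i \<in> B" "xs ! j \<in> B" using that xs(1) nth_mem by blast+
    moreover have "i \<noteq> j \<Longrightarrow> xs ! i \<noteq> xs ! j" using xs(2) that nth_eq_iff_index_eq by blast
    ultimately show ?thesis
      using ortho unfolding pairwise_def Linear_Algebra.orthogonal_def by (auto simp: norm_eq_1)
  qed
  moreover have "length xs = dim S" using xs card distinct_card by fastforce
  ultimately show ?thesis unfolding is_onb_iff orthonormal_list_def using xs span by blast
qed

lemma is_onb_some: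
  fixes S :: "'a::euclidean_space set"
  assumes "subspace S"
  shows "is_onb S (SOME xs. is_onb S xs)"
  using someI_ex[OF is_onb_exists[OF assms]] .

lemma inner_eq_sum_onb_orthogonal_comp:
  fixes x y :: "'a::euclidean_space"
  assumes as: "is_onb S as" and ds: "is_onb (orthogonal_comp S) ds"
  shows "x \<bullet> y = (\<Sum>i<length as. (x \<bullet> as ! i) * (y \<bullet> as ! i))
                + (\<Sum>k<length ds. (x \<bullet> ds ! k) * (y \<bullet> ds ! k))"
proof -
  have aon: "orthonormal_list as" and asp: "span (set as) = S"
    and don: "orthonormal_list ds" and dsp: "span (set ds) = orthogonal_comp S"
    using as ds unfolding is_onb_iff by auto
  have a_in: "as ! i \<in> S" if "i < length as" for i using asp that by (metis nth_mem span_base)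
  have d_in: "ds ! k \<in> orthogonal_comp S" if "k < length ds" for k
    using dsp that by (metis nth_mem span_base)
  define u where "u = y - (\<Sum>i<length as. (y \<bullet> as ! i) *\<^sub>R as ! i)"
  have "as ! j \<bullet> u = 0" if "j < length as" for j
    using inner_nth_sum_orthonormal_list[OF aon that]
    by (simp add: u_def inner_diff_right inner_commute)
  then have "u \<in> orthogonal_comp S"
    using orthogonal_span_list asp unfolding orthogonal_comp_def Linear_Algebra.orthogonal_def by blast
  then have "u = (\<Sum>k<length ds. (u \<bullet> ds ! k) *\<^sub>R ds ! k)"
    using orthonormal_list_expansion[OF don] dsp by blast
  also have "\<dots> = (\<Sum>k<length ds. (y \<bullet> ds ! k) *\<^sub>R ds ! k)"
    using a_in d_in
    by (intro sum.cong) (auto simp: u_def inner_diff_left inner_sum_left orthogonal_comp_def Linear_Algebra.orthogonal_def)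
  finally have "y = (\<Sum>i<length as. (y \<bullet> as ! i) *\<^sub>R as ! i) + (\<Sum>k<length ds. (y \<bullet> ds ! k) *\<^sub>R ds ! k)"
    unfolding u_def by (simp add: algebra_simps)
  then have "x \<bullet> y = x \<bullet> ((\<Sum>i<length as. (y \<bullet> as ! i) *\<^sub>R as ! i) + (\<Sum>k<length ds. (y \<bullet> ds ! k) *\<^sub>R ds ! k))"
    by simp
  then show ?thesis by (simp add: inner_add_right inner_sum_right mult.commute)
qed

lemma dim_orthogonal_comp:
  fixes S :: "'a::euclidean_space set"
  assumes "subspace S"
  shows "dim (orthogonal_comp S) + dim S = DIM('a)"
proof -
  have "{x + y |x y. x \<in> S \<and> y \<in> orthogonal_comp S} = UNIV"
    using subspace_sum_orthogonal_comp[OF assms] unfolding set_plus_def by blast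
  then show ?thesis
    using dim_sums_Int[OF assms subspace_orthogonal_comp[of S]] orthogonal_Int_0[OF assms]
    by (simp add: dim_UNIV)
qed

definition inner_mat :: "'a::real_inner list \<Rightarrow> 'a list \<Rightarrow> real mat" where
  "inner_mat xs ys = mat (length xs) (length ys) (\<lambda>(i, j). xs ! i \<bullet> ys ! j)"

lemma inner_mat_carrier [simp]: "inner_mat xs ys \<in> carrier_mat (length xs) (length ys)"
  by (simp add: inner_mat_def)

lemma dim_inner_mat [simp]:
  "dim_row (inner_mat xs ys) = length xs" "dim_col (inner_mat xs ys) = length ys"
  by (simp_all add: inner_mat_def)

lemma det_nat_eq_det: "det_nat p A = Determinant.det (mat p p (\<lambda>(i, j). A i j))"
  unfolding det_nat_def Determinant.det_def
  by (auto simp: atLeast0LessThan permutes_in_image intro!: sum.cong prod.cong)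

lemma gram_cos2_eq_det: "gram_cos2 xs ys = Determinant.det (inner_mat xs ys * inner_mat ys xs)"
  unfolding gram_cos2_def det_nat_eq_det
  by (rule arg_cong[where f = Determinant.det], rule eq_matI)
     (auto simp: inner_mat_def scalar_prod_def atLeast0LessThan inner_commute)

lemma gram_cos2_commute:
  assumes "length xs = length ys"
  shows "gram_cos2 xs ys = gram_cos2 ys xs"
proof -
  have M: "inner_mat xs ys \<in> carrier_mat (length xs) (length xs)"
    and M': "inner_mat ys xs \<in> carrier_mat (length xs) (length xs)"
    using assms inner_mat_carrier by metis+
  show ?thesis using det_mult[OF M M'] det_mult[OF M' M] by (simp add: gram_cos2_eq_det)
qed

lemma inner_mat_mult_orthogonal_comp:
  assumes xs: "orthonormal_list xs"
    and bs: "is_onb T bs" and cs: "is_onb (orthogonal_comp T) cs"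
  shows "inner_mat xs bs * inner_mat bs xs = 1\<^sub>m (length xs) - inner_mat xs cs * inner_mat cs xs"
proof (rule eq_matI)
  fix i j assume "i < dim_row (1\<^sub>m (length xs) - inner_mat xs cs * inner_mat cs xs)"
    and "j < dim_col (1\<^sub>m (length xs) - inner_mat xs cs * inner_mat cs xs)"
  then have i: "i < length xs" and j: "j < length xs" by auto
  show "(inner_mat xs bs * inner_mat bs xs) $$ (i, j)
          = (1\<^sub>m (length xs) - inner_mat xs cs * inner_mat cs xs) $$ (i, j)"
    using inner_eq_sum_onb_orthogonal_comp[OF bs cs, of "xs ! i" "xs ! j"] xs i j
    by (simp add: inner_mat_def orthonormal_list_def scalar_prod_def atLeast0LessThan inner_commute)
qed auto

lemma gram_cos2_orthogonal_comp:
  fixes S T :: "'a::euclidean_space set"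
  assumes as: "is_onb S as" and ds: "is_onb (orthogonal_comp S) ds"
    and bs: "is_onb T bs" and cs: "is_onb (orthogonal_comp T) cs"
  shows "gram_cos2 as bs = gram_cos2 cs ds"
proof -
  have "orthogonal_comp (orthogonal_comp S) = S"
    using as by (metis is_onb_iff orthogonal_comp_self subspace_span)
  then have as': "is_onb (orthogonal_comp (orthogonal_comp S)) as" using as by simp
  have "orthonormal_list as" "orthonormal_list cs" using as cs by (auto simp: is_onb_iff)
  have "gram_cos2 as bs = Determinant.det (1\<^sub>m (length as) - inner_mat as cs * inner_mat cs as)"
    using inner_mat_mult_orthogonal_comp[OF \<open>orthonormal_list as\<close> bs cs]
    by (simp add: gram_cos2_eq_det)
  also have "\<dots> = Determinant.det (1\<^sub>m (length cs) - inner_mat cs as * inner_mat as cs)"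
    by (rule det_one_minus_mult_commute) simp_all
  also have "\<dots> = gram_cos2 cs ds"
    using inner_mat_mult_orthogonal_comp[OF \<open>orthonormal_list cs\<close> ds as']
    by (simp add: gram_cos2_eq_det)
  finally show ?thesis .
qed

lemma cos2_angle_orthogonal_comp:
  fixes S T :: "'a::euclidean_space set"
  assumes S: "subspace S" and T: "subspace T"
  shows "cos2_angle S T = cos2_angle (orthogonal_comp S) (orthogonal_comp T)"
proof -
  define as bs cs ds where "as = (SOME xs. is_onb S xs)" and "bs = (SOME xs. is_onb T xs)"
    and "cs = (SOME xs. is_onb (orthogonal_comp T) xs)"
    and "ds = (SOME xs. is_onb (orthogonal_comp S) xs)"
  have as: "is_onb S as" and bs: "is_onb T bs"
    and cs: "is_onb (orthogonal_comp T) cs" and ds: "is_onb (orthogonal_comp S) ds"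
    unfolding as_def bs_def cs_def ds_def
    using is_onb_some S T subspace_orthogonal_comp by blast+
  have dims: "dim S \<le> dim T \<longleftrightarrow> dim (orthogonal_comp T) \<le> dim (orthogonal_comp S)"
    using dim_orthogonal_comp[OF S] dim_orthogonal_comp[OF T] by linarith
  have "length cs = length ds"
    if "dim S \<le> dim T" "dim (orthogonal_comp S) \<le> dim (orthogonal_comp T)"
    using that dims cs ds by (auto simp: is_onb_iff)
  then show ?thesis
    using gram_cos2_orthogonal_comp[OF as ds bs cs] gram_cos2_orthogonal_comp[OF bs cs as ds]
      gram_cos2_commute[of cs ds] dims
    unfolding cos2_angle_def as_def bs_def cs_def ds_def by auto
qed

theorem theorem1p3:
  fixes \<Sigma>1 \<Sigma>2 :: "'a::euclidean_space set"
  assumes "subspace \<Sigma>1" and "subspace \<Sigma>2"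
    and "1 \<le> dim \<Sigma>1" and "dim \<Sigma>1 \<le> DIM('a) - 1"
    and "1 \<le> dim \<Sigma>2" and "dim \<Sigma>2 \<le> DIM('a) - 1"
  shows "subspace_angle \<Sigma>1 \<Sigma>2 = subspace_angle (orthogonal_comp \<Sigma>1) (orthogonal_comp \<Sigma>2)"
  using cos2_angle_orthogonal_comp[OF assms(1,2)] unfolding subspace_angle_def by simp

end
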